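(* Consider the one-dimensional relativistic hydrodynamics system $\partial_t\mathbf{u}+\partial_x\mathbf{f}(\mathbf{u})=0$ with $\mathbf{u}=(D,m_1,E)^\top$ and $\mathbf{f}(\mathbf{u})=(Dv_1,\,m_1v_1+p,\,m_1)^\top$, closed by any one of the equations of state ID-EOS, TM-EOS, IP-EOS or RC-EOS described in the context. Let $\mathcal{U}'_{\mathrm{ad}}=\{(D,m_1,E): D>0,\ E-\sqrt{D^2+m_1^2}>0\}$. Let $\Delta x>0$, $\Delta t>0$, $w_i>0$, and let $\mathbf{u}^n_{i-1},\mathbf{u}^n_i,\mathbf{u}^n_{i+1}\in\mathcal{U}'_{\mathrm{ad}}$. Define \[ \mathbf{u}^{n+1}_i=\mathbf{u}^n_i-\frac{\Delta t}{w_i\Delta x}\Big[\mathbf{f}^{\mathrm{NF}}(\mathbf{u}^n_i,\mathbf{u}^n_{i+1})-\mathbf{f}^{\mathrm{NF}}(\mathbf{u}^n_{i-1},\mathbf{u}^n_i)\Big], \] where $\mathbf{f}^{\mathrm{NF}}$ is the Rusanov flux \[ \mathbf{f}^{\mathrm{NF}}(\mathbf{u}^-,\mathbf{u}^+)=\tfrac12\big[\mathbf{f}(\mathbf{u}^-)+\mathbf{f}(\mathbf{u}^+)\big]-\tfrac12\lambda(\mathbf{u}^-,\mathbf{u}^+)\,[\mathbf{u}^+-\mathbf{u}^-],\qquad \lambda(\mathbf{u}^-,\mathbf{u}^+)=\max\{r(\mathbf{u}^-),r(\mathbf{u}^+)\}, \] with $r(\mathbf{u})=\dfrac{|v_1|+c_s}{1+c_s|v_1|}$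 the spectral radius of the flux Jacobian $\mathbf{f}'(\mathbf{u})$. Set $\Lambda_{i-\frac12}=\lambda(\mathbf{u}^n_{i-1},\mathbf{u}^n_i)$ and $\Lambda_{i+\frac12}=\lambda(\mathbf{u}^n_i,\mathbf{u}^n_{i+1})$. If \[ \Delta t\,\frac{\Lambda_{i-\frac12}+\Lambda_{i+\frac12}}{2w_i\Delta x}<1, \] then $\mathbf{u}^{n+1}_i\in\mathcal{U}'_{\mathrm{ad}}$.
   Context: Units with speed of light $1$. Primitive variables: rest-mass density $\rho$, velocity $v_1$, pressure $p$; Lorentz factor $\Gamma=1/\sqrt{1-v_1^2}$; specific enthalpy $h$ given by an equation of state; conservative variables $D=\rho\Gamma$, $m_1=\rho h\Gamma^2 v_1$, $E=\rho h\Gamma^2-p$. The equations of state and corresponding sound speeds $c_s$ are: ID-EOS: $h=1+\frac{\gamma}{\gamma-1}\frac{p}{\rho}$ with constant $\gamma\in(1,2]$, $c_s^2=\frac{\gamma p}{h\rho}$; TM-EOS: $h=\frac{5p}{2\rho}+\sqrt{\frac{9p^2}{4\rho^2}+1}$, $c_s^2=\frac{5p\sqrt{9p^2+4\rho^2}+9p^2}{12p\sqrt{9p^2+4\rho^2}+36p^2+6\rho^2}$; IP-EOS: $h=\frac{2p}{\rho}+\sqrt{\frac{4p^2}{\rho^2}+1}$, $c_s^2=\frac{2p\sqrt{4p^2+\rho^2}}{4p\sqrt{4p^2+\rho^2}+4p^2+\rho^2}$; RC-EOS: $h=\frac{2(6p^2+4p\rho+\rho^2)}{\rho(3p+2\rho)}$,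 $c_s^2=\frac{p(3p+2\rho)(18p^2+24p\rho+5\rho^2)}{3(6p^2+4p\rho+\rho^2)(9p^2+12p\rho+2\rho^2)}$. For each of these equations of state, every $\mathbf{u}\in\mathcal{U}'_{\mathrm{ad}}$ corresponds to unique primitive variables with $\rho>0$, $p>0$, $|v_1|<1$ (this is how $v_1,p,c_s$ and $\mathbf{f}(\mathbf{u})$ are evaluated from $\mathbf{u}$), and $0<c_s<1$. The numbers $w_i$ are positive quadrature weights (sub-cell widths relative to $\Delta x$) of a first-order finite volume update at the $i$-th point. *)

theory Defs
  imports "HOL-Analysis.Analysis"
begin

text \<open>Equations of state. ID gamma is the ideal-gas EOS with adiabatic index gamma.\<close>
datatype eos = ID_EOS real | TM_EOS | IP_EOS | RC_EOS

definition eos_ok :: "eos \<Rightarrow> bool" where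
  "eos_ok e = (case e of ID_EOS g \<Rightarrow> 1 < g \<and> g \<le> 2 | _ \<Rightarrow> True)"

fun enthalpy :: "eos \<Rightarrow> real \<Rightarrow> real \<Rightarrow> real" where
  "enthalpy (ID_EOS g) rho p = 1 + g / (g - 1) * p / rho"
| "enthalpy TM_EOS rho p = 5 * p / (2 * rho) + sqrt (9 * p\<^sup>2 / (4 * rho\<^sup>2) + 1)"
| "enthalpy IP_EOS rho p = 2 * p / rho + sqrt (4 * p\<^sup>2 / rho\<^sup>2 + 1)"
| "enthalpy RC_EOS rho p = 2 * (6 * p\<^sup>2 + 4 * p * rho + rho\<^sup>2) / (rho * (3 * p + 2 * rho))"

fun sound_speed_sq :: "eos \<Rightarrow> real \<Rightarrow> real \<Rightarrow> real" where
  "sound_speed_sq (ID_EOS g) rho p = g * p / (enthalpy (ID_EOS g) rho p * rho)"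
| "sound_speed_sq TM_EOS rho p =
     (5 * p * sqrt (9 * p\<^sup>2 + 4 * rho\<^sup>2) + 9 * p\<^sup>2) /
     (12 * p * sqrt (9 * p\<^sup>2 + 4 * rho\<^sup>2) + 36 * p\<^sup>2 + 6 * rho\<^sup>2)"
| "sound_speed_sq IP_EOS rho p =
     (2 * p * sqrt (4 * p\<^sup>2 + rho\<^sup>2)) /
     (4 * p * sqrt (4 * p\<^sup>2 + rho\<^sup>2) + 4 * p\<^sup>2 + rho\<^sup>2)"
| "sound_speed_sq RC_EOS rho p =
     (p * (3 * p + 2 * rho) * (18 * p\<^sup>2 + 24 * p * rho + 5 * rho\<^sup>2)) /
     (3 * (6 * p\<^sup>2 + 4 * p * rho + rho\<^sup>2) * (9 * p\<^sup>2 + 12 * p * rho + 2 * rho\<^sup>2))"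

definition cons_of :: "eos \<Rightarrow> real \<Rightarrow> real \<Rightarrow> real \<Rightarrow> real \<times> real \<times> real" where
  "cons_of e rho v p =
     (let G = 1 / sqrt (1 - v\<^sup>2); h = enthalpy e rho p
      in (rho * G, rho * h * G\<^sup>2 * v, rho * h * G\<^sup>2 - p))"

definition Uad :: "(real \<times> real \<times> real) set" where
  "Uad = {(D, m, E). D > 0 \<and> E - sqrt (D\<^sup>2 + m\<^sup>2) > 0}"

definition prim :: "eos \<Rightarrow> real \<times> real \<times> real \<Rightarrow> real \<times> real \<times> real" where
  "prim e u = (THE (rho, v, p). rho > 0 \<and> p > 0 \<and> \<bar>v\<bar> < 1 \<and> cons_of e rho v p = u)"

definition vel :: "eos \<Rightarrow> real \<times> real \<times> real \<Rightarrow> real" where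
  "vel e u = fst (snd (prim e u))"

definition pres :: "eos \<Rightarrow> real \<times> real \<times> real \<Rightarrow> real" where
  "pres e u = snd (snd (prim e u))"

definition sound_speed :: "eos \<Rightarrow> real \<times> real \<times> real \<Rightarrow> real" where
  "sound_speed e u = sqrt (sound_speed_sq e (fst (prim e u)) (pres e u))"

definition flux :: "eos \<Rightarrow> real \<times> real \<times> real \<Rightarrow> real \<times> real \<times> real" where
  "flux e u = (case u of (D, m, E) \<Rightarrow> (D * vel e u, m * vel e u + pres e u, m))"

definition spec_rad :: "eos \<Rightarrow> real \<times> real \<times> real \<Rightarrow> real" where
  "spec_rad e u = (\<bar>vel e u\<bar> + sound_speed e u) / (1 + sound_speed e u * \<bar>vel e u\<bar>)"

definition lam :: "eos \<Rightarrow> real \<times> real \<times> real \<Rightarrow> real \<times> real \<times> real \<Rightarrow> real" where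
  "lam e um up = max (spec_rad e um) (spec_rad e up)"

definition rusanov :: "eos \<Rightarrow> real \<times> real \<times> real \<Rightarrow> real \<times> real \<times> real \<Rightarrow> real \<times> real \<times> real" where
  "rusanov e um up = (1/2) *\<^sub>R (flux e um + flux e up) - (lam e um up / 2) *\<^sub>R (up - um)"

end

(*
  For each equation of state the specific enthalpy is h = H(p/rho) with H(0) = 1,
  H(theta) >= 1 + 2 theta and H' >= 2.  For fixed a = m/D the ratio E/D is then a strictly
  increasing function of theta = p/rho starting at sqrt(1 + a^2), so every state of Uad has
  unique primitive variables.

  The core estimate is that l u - f(u) and l u + f(u) lie in the closure Ucl of Uad whenever
  l >= r(u).  Using Gamma^2 (1 - v^2) = 1 this reduces to
  (l - v)^2 ((rho h - p)^2 - rho^2) >= p^2 (1 - l v)^2, which follows from the bound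
  c_s^2 ((rho h - p)^2 - rho^2) >= p^2 together with the relativistic velocity addition
  behind r(u).  The Rusanov update is a combination of u_i, Lambda u_(i+1) - f(u_(i+1)) and
  Lambda' u_(i-1) + f(u_(i-1)) with nonnegative coefficients, the CFL condition making the
  coefficient of u_i positive; the open cone Uad absorbs additions from its closure.
*)
theory Submission
  imports Defs
begin

section \<open>The admissible cone\<close>

definition Ucl :: "(real \<times> real \<times> real) set" where
  "Ucl = {(D, m, E). 0 \<le> D \<and> sqrt (D\<^sup>2 + m\<^sup>2) \<le> E}"

lemma mem_UclI:
  assumes "0 \<le> D" and "0 \<le> E" and "D\<^sup>2 + m\<^sup>2 \<le> E\<^sup>2"
  shows "(D, m, E) \<in> Ucl"
  using assms by (simp add: Ucl_def real_le_lsqrt)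

lemma Ucl_reflect: "(D, - m, E) \<in> Ucl \<longleftrightarrow> (D, m, E) \<in> Ucl"
  by (simp add: Ucl_def)

lemma sqrt_sum_squares_scale:
  assumes "0 \<le> c"
  shows "sqrt ((c * x)\<^sup>2 + (c * y)\<^sup>2) = c * sqrt (x\<^sup>2 + y\<^sup>2)"
  using assms by (simp add: power_mult_distrib real_sqrt_mult flip: distrib_left)

lemma scaleR_mem_Uad: "0 < c \<Longrightarrow> u \<in> Uad \<Longrightarrow> c *\<^sub>R u \<in> Uad"
  by (auto simp: Uad_def sqrt_sum_squares_scale)

lemma scaleR_mem_Ucl: "0 \<le> c \<Longrightarrow> u \<in> Ucl \<Longrightarrow> c *\<^sub>R u \<in> Ucl"
  by (auto simp: Ucl_def sqrt_sum_squares_scale mult_left_mono)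

lemma add_mem_Uad_Ucl:
  assumes "u \<in> Uad" and "w \<in> Ucl"
  shows "u + w \<in> Uad"
proof -
  obtain D m E D' m' E' where u: "u = (D, m, E)" and w: "w = (D', m', E')"
    by (cases u, cases w) auto
  have "sqrt ((D + D')\<^sup>2 + (m + m')\<^sup>2) \<le> sqrt (D\<^sup>2 + m\<^sup>2) + sqrt (D'\<^sup>2 + m'\<^sup>2)"
    by (rule real_sqrt_sum_squares_triangle_ineq)
  then show ?thesis
    using assms by (auto simp: u w Uad_def Ucl_def)
qed

section \<open>Equations of state\<close>

text \<open>Conditions on \<open>H\<close>, the specific enthalpy as a function of \<open>\<theta> = p/\<rho>\<close>, under which
  primitive variables can be recovered: continuity and growth give existence, \<open>H' \<ge> 2\<close>
  gives uniqueness.\<close>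

definition admissible_enthalpy :: "(real \<Rightarrow> real) \<Rightarrow> bool" where
  "admissible_enthalpy H \<longleftrightarrow> continuous_on {0..} H \<and> H 0 = 1 \<and> (\<forall>\<theta>\<ge>0. 1 + 2 * \<theta> \<le> H \<theta>) \<and>
     (\<forall>\<theta>>0. \<exists>d\<ge>2. (H has_real_derivative d) (at \<theta>))"

lemma enthalpy_eq_enthalpy_1:
  assumes "0 < \<rho>" and "0 \<le> p"
  shows "enthalpy e \<rho> p = enthalpy e 1 (p / \<rho>)"
proof (cases e)
  case RC_EOS
  have "0 < \<rho> * (3 * p + 2 * \<rho>)" using assms by simp
  then show ?thesis using assms by (simp add: RC_EOS divide_simps power2_eq_square)
qed (use assms in \<open>simp_all add: power_divide mult.commute\<close>)

lemma admissible_enthalpy_ID: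
  assumes "1 < g" and "g \<le> 2"
  shows "admissible_enthalpy (enthalpy (ID_EOS g) 1)"
proof -
  have H: "enthalpy (ID_EOS g) 1 = (\<lambda>\<theta>. 1 + g / (g - 1) * \<theta>)"
    using assms by (simp add: fun_eq_iff)
  have k: "2 \<le> g / (g - 1)" using assms by (simp add: field_simps)
  have "1 + 2 * \<theta> \<le> 1 + g / (g - 1) * \<theta>" if "0 \<le> \<theta>" for \<theta>
    using mult_right_mono[OF k that] by simp
  moreover have "((\<lambda>\<theta>. 1 + g / (g - 1) * \<theta>) has_real_derivative g / (g - 1)) (at \<theta>)" for \<theta>
    using assms by (auto intro!: derivative_eq_intros)
  moreover have "continuous_on {0..} (\<lambda>\<theta>. 1 + g / (g - 1) * \<theta>)"
    by (intro continuous_intros)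
  ultimately show ?thesis
    using k unfolding admissible_enthalpy_def H by auto
qed

lemma admissible_enthalpy_TM: "admissible_enthalpy (enthalpy TM_EOS 1)"
proof -
  have H: "enthalpy TM_EOS 1 = (\<lambda>\<theta>. 5 * \<theta> / 2 + sqrt (9 * \<theta>\<^sup>2 / 4 + 1))"
    by (simp add: fun_eq_iff)
  have "\<exists>d\<ge>2. ((\<lambda>\<theta>. 5 * \<theta> / 2 + sqrt (9 * \<theta>\<^sup>2 / 4 + 1)) has_real_derivative d) (at \<theta>)"
    if "0 < \<theta>" for \<theta> :: real
  proof (intro exI conjI)
    define S where "S = sqrt (9 * \<theta>\<^sup>2 / 4 + 1)"
    have pos: "0 < 9 * \<theta>\<^sup>2 / 4 + 1" by (intro add_nonneg_pos) auto
    then have "S > 0" by (simp add: S_def)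
    show "((\<lambda>\<theta>. 5 * \<theta> / 2 + sqrt (9 * \<theta>\<^sup>2 / 4 + 1)) has_real_derivative 5 / 2 + 9 * \<theta> / (4 * S)) (at \<theta>)"
      unfolding S_def by (rule derivative_eq_intros refl | use pos in \<open>simp add: field_simps\<close>)+
    have "0 \<le> 9 * \<theta> / (4 * S)" using \<open>0 < \<theta>\<close> \<open>S > 0\<close> by simp
    then show "2 \<le> 5 / 2 + 9 * \<theta> / (4 * S)" by simp
  qed
  moreover have "1 + 2 * \<theta> \<le> 5 * \<theta> / 2 + sqrt (9 * \<theta>\<^sup>2 / 4 + 1)" if "0 \<le> \<theta>" for \<theta> :: real
  proof -
    have "1 \<le> sqrt (9 * \<theta>\<^sup>2 / 4 + 1)" by simp
    then show ?thesis using that by linarith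
  qed
  ultimately show ?thesis
    unfolding admissible_enthalpy_def H by (auto intro!: continuous_intros)
qed

lemma admissible_enthalpy_IP: "admissible_enthalpy (enthalpy IP_EOS 1)"
proof -
  have H: "enthalpy IP_EOS 1 = (\<lambda>\<theta>. 2 * \<theta> + sqrt (4 * \<theta>\<^sup>2 + 1))"
    by (simp add: fun_eq_iff)
  have "\<exists>d\<ge>2. ((\<lambda>\<theta>. 2 * \<theta> + sqrt (4 * \<theta>\<^sup>2 + 1)) has_real_derivative d) (at \<theta>)"
    if "0 < \<theta>" for \<theta> :: real
  proof (intro exI conjI)
    define S where "S = sqrt (4 * \<theta>\<^sup>2 + 1)"
    have pos: "0 < 4 * \<theta>\<^sup>2 + 1" by (intro add_nonneg_pos) auto
    then have "S > 0" by (simp add: S_def)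
    show "((\<lambda>\<theta>. 2 * \<theta> + sqrt (4 * \<theta>\<^sup>2 + 1)) has_real_derivative 2 + 4 * \<theta> / S) (at \<theta>)"
      unfolding S_def by (rule derivative_eq_intros refl | use pos in \<open>simp add: field_simps\<close>)+
    show "2 \<le> 2 + 4 * \<theta> / S" using \<open>0 < \<theta>\<close> \<open>S > 0\<close> by simp
  qed
  moreover have "1 + 2 * \<theta> \<le> 2 * \<theta> + sqrt (4 * \<theta>\<^sup>2 + 1)" for \<theta> :: real
  proof -
    have "1 \<le> sqrt (4 * \<theta>\<^sup>2 + 1)" by simp
    then show ?thesis by linarith
  qed
  ultimately show ?thesis
    unfolding admissible_enthalpy_def H by (auto intro!: continuous_intros)
qed

lemma admissible_enthalpy_RC: "admissible_enthalpy (enthalpy RC_EOS 1)"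
proof -
  have H: "enthalpy RC_EOS 1 = (\<lambda>\<theta>. 2 * (6 * \<theta>\<^sup>2 + 4 * \<theta> + 1) / (3 * \<theta> + 2))"
    by (simp add: fun_eq_iff)
  have "\<exists>d\<ge>2. ((\<lambda>\<theta>. 2 * (6 * \<theta>\<^sup>2 + 4 * \<theta> + 1) / (3 * \<theta> + 2)) has_real_derivative d) (at \<theta>)"
    if "0 < \<theta>" for \<theta> :: real
  proof (intro exI conjI)
    have q: "0 < 3 * \<theta> + 2" using that by simp
    show "((\<lambda>\<theta>. 2 * (6 * \<theta>\<^sup>2 + 4 * \<theta> + 1) / (3 * \<theta> + 2)) has_real_derivative
        2 * (18 * \<theta>\<^sup>2 + 24 * \<theta> + 5) / (3 * \<theta> + 2)\<^sup>2) (at \<theta>)"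
      by (rule derivative_eq_intros refl | use q in \<open>simp add: field_simps power2_eq_square\<close>)+
    have "(3 * \<theta> + 2)\<^sup>2 \<le> 18 * \<theta>\<^sup>2 + 24 * \<theta> + 5"
      using that by (simp add: power2_eq_square algebra_simps)
    then show "2 \<le> 2 * (18 * \<theta>\<^sup>2 + 24 * \<theta> + 5) / (3 * \<theta> + 2)\<^sup>2"
      using q by (simp add: field_simps)
  qed
  moreover have "1 + 2 * \<theta> \<le> 2 * (6 * \<theta>\<^sup>2 + 4 * \<theta> + 1) / (3 * \<theta> + 2)" if "0 \<le> \<theta>" for \<theta> :: real
    using that by (simp add: field_simps power2_eq_square)
  ultimately show ?thesis
    unfolding admissible_enthalpy_def H by (auto intro!: continuous_intros)
qed

lemma admissible_enthalpy_eos: "eos_ok e \<Longrightarrow> admissible_enthalpy (enthalpy e 1)"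
  by (cases e) (auto simp: eos_ok_def admissible_enthalpy_ID admissible_enthalpy_TM
      admissible_enthalpy_IP admissible_enthalpy_RC)

lemma enthalpy_1_ge: "eos_ok e \<Longrightarrow> 0 \<le> \<theta> \<Longrightarrow> 1 + 2 * \<theta> \<le> enthalpy e 1 \<theta>"
  using admissible_enthalpy_eos[of e] by (simp add: admissible_enthalpy_def)

lemma sound_speed_sq_bound_ID:
  assumes "0 < \<rho>" and "0 < p" and "1 < g" and "g \<le> 2"
  shows "p\<^sup>2 \<le> sound_speed_sq (ID_EOS g) \<rho> p * ((\<rho> * enthalpy (ID_EOS g) \<rho> p - p)\<^sup>2 - \<rho>\<^sup>2)"
proof -
  define k where "k = g / (g - 1)"
  have k: "2 \<le> k" "g * (k - 1) = k" using assms by (simp_all add: k_def field_simps)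
  define P where "P = \<rho> + k * p"
  have P: "\<rho> * enthalpy (ID_EOS g) \<rho> p = P"
    using assms by (simp add: P_def k_def field_simps)
  have "0 < P" using assms k unfolding P_def by (intro add_pos_pos mult_pos_pos) auto
  have "0 \<le> (2 * k - 1) * \<rho> + k * (k - 2) * p"
    using assms k by (intro add_nonneg_nonneg mult_nonneg_nonneg) auto
  then have "P \<le> k * (2 * \<rho> + (k - 1) * p)"
    by (simp add: P_def algebra_simps)
  then have "p\<^sup>2 * P \<le> p\<^sup>2 * (k * (2 * \<rho> + (k - 1) * p))"
    by (rule mult_left_mono) simp
  also have "\<dots> = g * (k - 1) * (p\<^sup>2 * (2 * \<rho> + (k - 1) * p))"
    by (simp add: k(2))
  also have "\<dots> = g * p * ((P - p)\<^sup>2 - \<rho>\<^sup>2)"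
    by (simp add: P_def power2_eq_square algebra_simps)
  finally show ?thesis
    using P \<open>0 < P\<close> by (simp add: field_simps mult.commute)
qed

lemma sound_speed_sq_bound_TM:
  assumes "0 < \<rho>" and "0 < p"
  shows "p\<^sup>2 \<le> sound_speed_sq TM_EOS \<rho> p * ((\<rho> * enthalpy TM_EOS \<rho> p - p)\<^sup>2 - \<rho>\<^sup>2)"
proof -
  define S where "S = sqrt (9 * p\<^sup>2 + 4 * \<rho>\<^sup>2)"
  have "0 \<le> S" by (simp add: S_def)
  have S2: "S\<^sup>2 = 9 * p\<^sup>2 + 4 * \<rho>\<^sup>2" by (simp add: S_def add_nonneg_nonneg)
  have "sqrt (9 * p\<^sup>2 / (4 * \<rho>\<^sup>2) + 1) = S / (2 * \<rho>)"
    using assms S2 \<open>0 \<le> S\<close> by (intro real_sqrt_unique) (auto simp: field_simps power2_eq_square)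
  then have Pp: "\<rho> * enthalpy TM_EOS \<rho> p - p = (3 * p + S) / 2"
    using assms by (simp add: field_simps)
  have "(\<rho> * enthalpy TM_EOS \<rho> p - p)\<^sup>2 - \<rho>\<^sup>2 = (9 * p\<^sup>2 + 6 * p * S + S\<^sup>2 - 4 * \<rho>\<^sup>2) / 4"
    unfolding Pp by (simp add: power2_eq_square field_simps)
  also have "\<dots> = 3 * p * (3 * p + S) / 2"
    unfolding S2 by (simp add: power2_eq_square field_simps)
  finally have B: "(\<rho> * enthalpy TM_EOS \<rho> p - p)\<^sup>2 - \<rho>\<^sup>2 = 3 * p * (3 * p + S) / 2" .
  have den: "0 < 12 * p * S + 36 * p\<^sup>2 + 6 * \<rho>\<^sup>2"
    using assms \<open>0 \<le> S\<close> by (intro add_nonneg_pos add_pos_pos) auto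
  have "(5 * p * S + 9 * p\<^sup>2) * (3 * p * (3 * p + S) / 2) - p\<^sup>2 * (12 * p * S + 36 * p\<^sup>2 + 6 * \<rho>\<^sup>2)
      = p\<^sup>2 * (24 * p * S + 72 * p\<^sup>2 + 24 * \<rho>\<^sup>2) + 15 * p\<^sup>2 / 2 * (S\<^sup>2 - 9 * p\<^sup>2 - 4 * \<rho>\<^sup>2)"
    by (simp add: algebra_simps power2_eq_square)
  also have "\<dots> \<ge> 0" unfolding S2 using assms \<open>0 \<le> S\<close> by simp
  finally show ?thesis
    unfolding B using den by (simp add: S_def field_simps)
qed

lemma sound_speed_sq_bound_IP:
  assumes "0 < \<rho>" and "0 < p"
  shows "p\<^sup>2 \<le> sound_speed_sq IP_EOS \<rho> p * ((\<rho> * enthalpy IP_EOS \<rho> p - p)\<^sup>2 - \<rho>\<^sup>2)"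
proof -
  define S where "S = sqrt (4 * p\<^sup>2 + \<rho>\<^sup>2)"
  have "0 \<le> S" by (simp add: S_def)
  have S2: "S\<^sup>2 = 4 * p\<^sup>2 + \<rho>\<^sup>2" by (simp add: S_def add_nonneg_nonneg)
  have "sqrt (4 * p\<^sup>2 / \<rho>\<^sup>2 + 1) = S / \<rho>"
    using assms S2 \<open>0 \<le> S\<close> by (intro real_sqrt_unique) (auto simp: field_simps power2_eq_square)
  then have Pp: "\<rho> * enthalpy IP_EOS \<rho> p - p = p + S"
    using assms by (simp add: field_simps)
  have "(\<rho> * enthalpy IP_EOS \<rho> p - p)\<^sup>2 - \<rho>\<^sup>2 = p\<^sup>2 + 2 * p * S + S\<^sup>2 - \<rho>\<^sup>2"
    unfolding Pp by (simp add: power2_eq_square algebra_simps)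
  also have "\<dots> = 5 * p\<^sup>2 + 2 * p * S"
    unfolding S2 by simp
  finally have B: "(\<rho> * enthalpy IP_EOS \<rho> p - p)\<^sup>2 - \<rho>\<^sup>2 = 5 * p\<^sup>2 + 2 * p * S" .
  have den: "0 < 4 * p * S + 4 * p\<^sup>2 + \<rho>\<^sup>2"
    using assms \<open>0 \<le> S\<close> by (intro add_nonneg_pos add_pos_pos) auto
  have "(2 * p * S) * (5 * p\<^sup>2 + 2 * p * S) - p\<^sup>2 * (4 * p * S + 4 * p\<^sup>2 + \<rho>\<^sup>2)
      = 6 * p ^ 3 * S + 12 * p ^ 4 + 3 * p\<^sup>2 * \<rho>\<^sup>2 + 4 * p\<^sup>2 * (S\<^sup>2 - 4 * p\<^sup>2 - \<rho>\<^sup>2)"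
    by (simp add: algebra_simps power2_eq_square power3_eq_cube power4_eq_xxxx)
  also have "\<dots> \<ge> 0" unfolding S2 using assms \<open>0 \<le> S\<close> by simp
  finally show ?thesis
    unfolding B using den by (simp add: S_def field_simps)
qed

lemma sound_speed_sq_bound_RC:
  assumes "0 < \<rho>" and "0 < p"
  shows "p\<^sup>2 \<le> sound_speed_sq RC_EOS \<rho> p * ((\<rho> * enthalpy RC_EOS \<rho> p - p)\<^sup>2 - \<rho>\<^sup>2)"
proof -
  define q where "q = 3 * p + 2 * \<rho>"
  define n1 where "n1 = 6 * p\<^sup>2 + 4 * p * \<rho> + \<rho>\<^sup>2"
  define n2 where "n2 = 9 * p\<^sup>2 + 12 * p * \<rho> + 2 * \<rho>\<^sup>2"
  define m1 where "m1 = 18 * p\<^sup>2 + 24 * p * \<rho> + 5 * \<rho>\<^sup>2"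
  define m2 where "m2 = 9 * p\<^sup>2 + 9 * p * \<rho> + 4 * \<rho>\<^sup>2"
  define t where "t = 3 * p + \<rho>"
  have pos: "0 < q" "0 < n1" "0 < n2"
    using assms by (simp_all add: q_def n1_def n2_def add_pos_pos)
  have Pp: "\<rho> * enthalpy RC_EOS \<rho> p - p = (9 * p\<^sup>2 + 6 * p * \<rho> + 2 * \<rho>\<^sup>2) / q"
  proof -
    have "\<rho> * (3 * p + 2 * \<rho>) \<noteq> 0" using assms by simp
    then show ?thesis
      using pos by (simp add: q_def divide_simps) (simp add: power2_eq_square algebra_simps)
  qed
  have "(\<rho> * enthalpy RC_EOS \<rho> p - p)\<^sup>2 - \<rho>\<^sup>2 = ((9 * p\<^sup>2 + 6 * p * \<rho> + 2 * \<rho>\<^sup>2)\<^sup>2 - \<rho>\<^sup>2 * q\<^sup>2) / q\<^sup>2"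
    unfolding Pp using pos by (simp add: field_simps)
  also have "(9 * p\<^sup>2 + 6 * p * \<rho> + 2 * \<rho>\<^sup>2)\<^sup>2 - \<rho>\<^sup>2 * q\<^sup>2 = 3 * p * t * m2"
    unfolding q_def t_def m2_def by algebra
  finally have B: "(\<rho> * enthalpy RC_EOS \<rho> p - p)\<^sup>2 - \<rho>\<^sup>2 = 3 * p * t * m2 / q\<^sup>2" .
  have c: "sound_speed_sq RC_EOS \<rho> p = p * q * m1 / (3 * n1 * n2)"
    by (simp add: q_def n1_def n2_def m1_def)
  have "t * m1 * m2 - n1 * n2 * q = 324 * p ^ 5 + 864 * p ^ 4 * \<rho> + 954 * p ^ 3 * \<rho>\<^sup>2
      + 558 * p\<^sup>2 * \<rho> ^ 3 + 155 * p * \<rho> ^ 4 + 16 * \<rho> ^ 5"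
    unfolding t_def m1_def m2_def n1_def n2_def q_def by algebra
  also have "\<dots> \<ge> 0"
    using assms by (intro add_nonneg_nonneg mult_nonneg_nonneg) auto
  finally have "p\<^sup>2 * (n1 * n2 * q) \<le> p\<^sup>2 * (t * m1 * m2)"
    by (intro mult_left_mono) auto
  then show ?thesis
    unfolding B c using pos by (simp add: field_simps power2_eq_square)
qed

text \<open>This is all the argument needs to know about the sound speed.\<close>

lemma sound_speed_sq_bound:
  assumes "eos_ok e" and "0 < \<rho>" and "0 < p"
  shows "p\<^sup>2 \<le> sound_speed_sq e \<rho> p * ((\<rho> * enthalpy e \<rho> p - p)\<^sup>2 - \<rho>\<^sup>2)"
  using assms sound_speed_sq_bound_ID sound_speed_sq_bound_TM sound_speed_sq_bound_IP
    sound_speed_sq_bound_RC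
  by (cases e) (auto simp: eos_ok_def)

lemma enthalpy_density_ge:
  assumes "eos_ok e" and "0 < \<rho>" and "0 < p"
  shows "\<rho> + 2 * p \<le> \<rho> * enthalpy e \<rho> p"
proof -
  have "1 + 2 * (p / \<rho>) \<le> enthalpy e 1 (p / \<rho>)"
    using enthalpy_1_ge[OF assms(1), of "p / \<rho>"] assms(2,3) by simp
  then show ?thesis
    using enthalpy_eq_enthalpy_1[of \<rho> p e] assms(2,3) by (simp add: field_simps)
qed

lemma sq_le_enthalpy_gap:
  fixes \<rho> p P :: real
  assumes "0 < \<rho>" and "0 < p" and "\<rho> + 2 * p \<le> P"
  shows "p\<^sup>2 \<le> (P - p)\<^sup>2 - \<rho>\<^sup>2"
proof -
  have "(\<rho> + p)\<^sup>2 \<le> (P - p)\<^sup>2" using assms by (intro power_mono) auto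
  then show ?thesis using mult_pos_pos[OF assms(1,2)] by (simp add: power2_eq_square algebra_simps)
qed

lemma sound_speed_sq_pos:
  assumes "eos_ok e" and "0 < \<rho>" and "0 < p"
  shows "0 < sound_speed_sq e \<rho> p"
proof -
  define B where "B = (\<rho> * enthalpy e \<rho> p - p)\<^sup>2 - \<rho>\<^sup>2"
  have "0 < p\<^sup>2" using assms(3) by simp
  moreover have "p\<^sup>2 \<le> B"
    using sq_le_enthalpy_gap[OF assms(2,3) enthalpy_density_ge[OF assms]] by (simp add: B_def)
  moreover have "p\<^sup>2 \<le> sound_speed_sq e \<rho> p * B"
    using sound_speed_sq_bound[OF assms] by (simp add: B_def)
  ultimately have "0 < sound_speed_sq e \<rho> p * B" and "0 < B" by linarith+
  then show ?thesis by (simp add: zero_less_mult_iff)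
qed

section \<open>Recovery of the primitive variables\<close>

text \<open>\<open>E/D\<close> in terms of \<open>\<theta> = p/\<rho>\<close> at fixed \<open>a = m/D\<close>, using \<open>h\<Gamma> = sqrt (h\<^sup>2 + a\<^sup>2)\<close>:
  it equals \<open>h\<Gamma> - \<theta>/\<Gamma>\<close>.\<close>

definition energy_ratio :: "(real \<Rightarrow> real) \<Rightarrow> real \<Rightarrow> real \<Rightarrow> real" where
  "energy_ratio H a \<theta> = sqrt ((H \<theta>)\<^sup>2 + a\<^sup>2) - \<theta> * H \<theta> / sqrt ((H \<theta>)\<^sup>2 + a\<^sup>2)"

lemma energy_ratio_has_real_derivative:
  assumes "(H has_real_derivative d) (at \<theta>)" and "0 < H \<theta>"
  shows "(energy_ratio H a has_real_derivative
      (a\<^sup>2 * (d * (H \<theta> - \<theta>) - H \<theta>) + (H \<theta>) ^ 3 * (d - 1)) / (sqrt ((H \<theta>)\<^sup>2 + a\<^sup>2)) ^ 3) (at \<theta>)"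
proof -
  define Y where "Y = sqrt ((H \<theta>)\<^sup>2 + a\<^sup>2)"
  have pos: "0 < (H \<theta>)\<^sup>2 + a\<^sup>2" using assms(2) by (simp add: add_pos_nonneg)
  then have "0 < Y" by (simp add: Y_def)
  have Y2: "Y\<^sup>2 = (H \<theta>)\<^sup>2 + a\<^sup>2" using pos by (simp add: Y_def)
  have dY: "((\<lambda>\<theta>. sqrt ((H \<theta>)\<^sup>2 + a\<^sup>2)) has_real_derivative inverse Y / 2 * (2 * H \<theta> * d)) (at \<theta>)"
  proof -
    have inner: "((\<lambda>\<theta>. (H \<theta>)\<^sup>2 + a\<^sup>2) has_real_derivative 2 * H \<theta> * d) (at \<theta>)"
      by (auto intro!: derivative_eq_intros assms(1))
    show ?thesis unfolding Y_def by (rule DERIV_chain2[OF DERIV_real_sqrt[OF pos] inner])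
  qed
  have "(energy_ratio H a has_real_derivative
      inverse Y / 2 * (2 * H \<theta> * d)
      - ((1 * H \<theta> + d * \<theta>) * Y - \<theta> * H \<theta> * (inverse Y / 2 * (2 * H \<theta> * d))) / (Y * Y)) (at \<theta>)"
    unfolding energy_ratio_def[abs_def]
    by (rule DERIV_diff[OF dY DERIV_divide[OF DERIV_mult[OF DERIV_ident assms(1)] dY], folded Y_def])
      (use \<open>0 < Y\<close> assms(2) in \<open>simp add: Y_def\<close>)
  also have "inverse Y / 2 * (2 * H \<theta> * d)
      - ((1 * H \<theta> + d * \<theta>) * Y - \<theta> * H \<theta> * (inverse Y / 2 * (2 * H \<theta> * d))) / (Y * Y)
      = (Y\<^sup>2 * (H \<theta> * d - H \<theta> - \<theta> * d) + \<theta> * (H \<theta>)\<^sup>2 * d) / Y ^ 3"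
    using \<open>0 < Y\<close> by (simp add: field_simps power2_eq_square power3_eq_cube)
  also have "\<dots> = (a\<^sup>2 * (d * (H \<theta> - \<theta>) - H \<theta>) + (H \<theta>) ^ 3 * (d - 1)) / Y ^ 3"
    unfolding Y2 by (simp add: algebra_simps power2_eq_square power3_eq_cube)
  finally show ?thesis unfolding Y_def .
qed

lemma strict_mono_on_energy_ratio:
  assumes "admissible_enthalpy H"
  shows "strict_mono_on {0<..} (energy_ratio H a)"
proof (rule strict_mono_onI)
  fix x y :: real
  assume "x \<in> {0<..}" and "x < y"
  show "energy_ratio H a x < energy_ratio H a y"
  proof (rule DERIV_pos_imp_increasing[OF \<open>x < y\<close>])
    fix \<theta> assume "x \<le> \<theta>" "\<theta> \<le> y"
    with \<open>x \<in> {0<..}\<close> have "0 < \<theta>" by simp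
    with assms obtain d where "2 \<le> d" and d: "(H has_real_derivative d) (at \<theta>)"
      and H: "1 + 2 * \<theta> \<le> H \<theta>"
      unfolding admissible_enthalpy_def by force
    have "H \<theta> \<le> d * (H \<theta> - \<theta>)"
      using mult_right_mono[OF \<open>2 \<le> d\<close>, of "H \<theta> - \<theta>"] H \<open>0 < \<theta>\<close> by simp
    then have "0 < a\<^sup>2 * (d * (H \<theta> - \<theta>) - H \<theta>) + (H \<theta>) ^ 3 * (d - 1)"
      using H \<open>0 < \<theta>\<close> \<open>2 \<le> d\<close> by (intro add_nonneg_pos mult_nonneg_nonneg mult_pos_pos) auto
    moreover have "0 < sqrt ((H \<theta>)\<^sup>2 + a\<^sup>2)"
      using H \<open>0 < \<theta>\<close> by (simp add: add_pos_nonneg)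
    ultimately show "\<exists>D. (energy_ratio H a has_real_derivative D) (at \<theta>) \<and> 0 < D"
      using energy_ratio_has_real_derivative[OF d, of a] H \<open>0 < \<theta>\<close> by force
  qed
qed

lemma energy_ratio_surj:
  assumes "admissible_enthalpy H" and "sqrt (1 + a\<^sup>2) < b"
  shows "\<exists>\<theta>>0. energy_ratio H a \<theta> = b"
proof -
  have H: "continuous_on {0..} H" "H 0 = 1" "\<And>\<theta>. 0 \<le> \<theta> \<Longrightarrow> 1 + 2 * \<theta> \<le> H \<theta>"
    using assms(1) by (auto simp: admissible_enthalpy_def)
  have "0 \<le> sqrt (1 + a\<^sup>2)" by simp
  with assms(2) have "0 < b" by linarith
  define M where "M = b + \<bar>a\<bar>"
  define h where "h = H M"
  define Y where "Y = sqrt (h\<^sup>2 + a\<^sup>2)"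
  have "0 < M" using \<open>0 < b\<close> by (simp add: M_def)
  then have h: "1 + 2 * M \<le> h" using H(3)[of M] by (simp add: h_def)
  have "0 < Y" using h \<open>0 < M\<close> by (simp add: Y_def add_pos_nonneg)
  have "Y \<le> h + \<bar>a\<bar>"
    unfolding Y_def using h \<open>0 < M\<close> by (intro real_le_lsqrt) (auto simp: power2_eq_square algebra_simps)
  then have "b * Y \<le> b * h + b * \<bar>a\<bar>"
    using mult_left_mono[of Y "h + \<bar>a\<bar>" b] \<open>0 < b\<close> by (simp add: algebra_simps)
  also have "\<dots> \<le> h * (h - M)"
  proof -
    have "b \<le> h" using h \<open>0 < b\<close> by (simp add: M_def)
    then have "b * \<bar>a\<bar> \<le> h * \<bar>a\<bar>" by (intro mult_right_mono) auto
    moreover have "h * (2 * M) \<le> h * h" using h \<open>0 < M\<close> by (intro mult_left_mono) auto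
    ultimately show ?thesis by (simp add: M_def algebra_simps)
  qed
  also have "\<dots> \<le> Y\<^sup>2 - M * h"
    by (simp add: Y_def algebra_simps power2_eq_square)
  finally have "b \<le> (Y\<^sup>2 - M * h) / Y"
    using \<open>0 < Y\<close> by (simp add: pos_le_divide_eq)
  also have "\<dots> = energy_ratio H a M"
    unfolding energy_ratio_def h_def[symmetric] Y_def[symmetric]
    using \<open>0 < Y\<close> by (simp add: field_simps power2_eq_square)
  finally have "b \<le> energy_ratio H a M" .
  moreover have lo: "energy_ratio H a 0 < b"
    using assms(2) H(2) by (simp add: energy_ratio_def)
  moreover have "continuous_on {0..M} (energy_ratio H a)"
  proof -
    have cont: "continuous_on {0..M} H" using H(1) by (rule continuous_on_subset) auto
    have nz: "\<forall>\<theta>\<in>{0..M}. sqrt ((H \<theta>)\<^sup>2 + a\<^sup>2) \<noteq> 0"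
      using H(3) by (fastforce simp: add_nonneg_eq_0_iff)
    show ?thesis
      unfolding energy_ratio_def[abs_def] by (intro continuous_intros cont nz)
  qed
  ultimately obtain \<theta> where \<theta>: "0 \<le> \<theta>" "energy_ratio H a \<theta> = b"
    using IVT'[of "energy_ratio H a" 0 b M] \<open>0 < M\<close> by force
  with lo have "0 < \<theta>" by (cases "\<theta> = 0") auto
  with \<theta> show ?thesis by blast
qed

text \<open>Given \<open>\<theta>\<close>, the primitive variables are \<open>\<rho> = D/\<Gamma>\<close>, \<open>v = a/(h\<Gamma>)\<close>, \<open>p = \<rho>\<theta>\<close>.\<close>

definition prim_of_theta :: "(real \<Rightarrow> real) \<Rightarrow> real \<Rightarrow> real \<Rightarrow> real \<Rightarrow> real \<times> real \<times> real" where
  "prim_of_theta H D m \<theta> =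
     (let Y = sqrt ((H \<theta>)\<^sup>2 + (m / D)\<^sup>2) in (D * H \<theta> / Y, m / D / Y, D * H \<theta> * \<theta> / Y))"

lemma prim_of_theta_physical:
  assumes "eos_ok e" and "0 < D" and "0 < \<theta>" and "energy_ratio (enthalpy e 1) (m / D) \<theta> = E / D"
  shows "case prim_of_theta (enthalpy e 1) D m \<theta> of
    (\<rho>, v, p) \<Rightarrow> 0 < \<rho> \<and> 0 < p \<and> \<bar>v\<bar> < 1 \<and> cons_of e \<rho> v p = (D, m, E)"
proof -
  define a where "a = m / D"
  define h where "h = enthalpy e 1 \<theta>"
  define Y where "Y = sqrt (h\<^sup>2 + a\<^sup>2)"
  define \<rho> where "\<rho> = D * h / Y"
  define v where "v = a / Y"
  have "0 < h" using enthalpy_1_ge[OF assms(1), of \<theta>] assms(3) by (simp add: h_def)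
  then have "0 < Y" and Y2: "Y\<^sup>2 = h\<^sup>2 + a\<^sup>2" by (simp_all add: Y_def add_pos_nonneg)
  have "0 < \<rho>" using assms(2) \<open>0 < h\<close> \<open>0 < Y\<close> by (simp add: \<rho>_def)
  have "a\<^sup>2 < Y\<^sup>2" using Y2 \<open>0 < h\<close> by simp
  then have "\<bar>v\<bar> < 1" using \<open>0 < Y\<close> by (simp add: v_def abs_divide power2_less_imp_less)
  have \<Gamma>: "1 / sqrt (1 - v\<^sup>2) = Y / h"
  proof -
    have "1 - v\<^sup>2 = (Y\<^sup>2 - a\<^sup>2) / Y\<^sup>2" using \<open>0 < Y\<close> by (simp add: v_def power_divide field_simps)
    then have "sqrt (1 - v\<^sup>2) = h / Y"
      using \<open>0 < h\<close> \<open>0 < Y\<close> by (intro real_sqrt_unique) (simp_all add: Y2 power_divide)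
    then show ?thesis by simp
  qed
  have h: "enthalpy e \<rho> (\<rho> * \<theta>) = h"
    using enthalpy_eq_enthalpy_1[of \<rho> "\<rho> * \<theta>" e] \<open>0 < \<rho>\<close> assms(3) by (simp add: h_def)
  have "\<rho> * h * (Y / h)\<^sup>2 - \<rho> * \<theta> = D * (Y - \<theta> * h / Y)"
    using \<open>0 < h\<close> \<open>0 < Y\<close> by (simp add: \<rho>_def field_simps power2_eq_square)
  also have "\<dots> = E"
    using assms(2,4) by (simp add: energy_ratio_def a_def h_def Y_def field_simps)
  moreover have "\<rho> * (Y / h) = D" and "\<rho> * h * (Y / h)\<^sup>2 * v = m"
    using assms(2) \<open>0 < h\<close> \<open>0 < Y\<close> by (simp_all add: \<rho>_def v_def a_def field_simps power2_eq_square)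
  ultimately have "cons_of e \<rho> v (\<rho> * \<theta>) = (D, m, E)"
    unfolding cons_of_def Let_def \<Gamma> h by simp
  moreover have "prim_of_theta (enthalpy e 1) D m \<theta> = (\<rho>, v, \<rho> * \<theta>)"
    by (simp add: prim_of_theta_def Let_def \<rho>_def v_def Y_def h_def a_def)
  ultimately show ?thesis
    using \<open>0 < \<rho>\<close> \<open>\<bar>v\<bar> < 1\<close> assms(3) by simp
qed

lemma cons_of_imp_prim_of_theta:
  assumes "eos_ok e" and "0 < \<rho>" and "0 < p" and "\<bar>v\<bar> < 1" and "cons_of e \<rho> v p = (D, m, E)"
  shows "energy_ratio (enthalpy e 1) (m / D) (p / \<rho>) = E / D"
    and "prim_of_theta (enthalpy e 1) D m (p / \<rho>) = (\<rho>, v, p)"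
proof -
  define G where "G = 1 / sqrt (1 - v\<^sup>2)"
  define h where "h = enthalpy e 1 (p / \<rho>)"
  have "0 < 1 - v\<^sup>2" using assms(4) by (simp add: abs_square_less_1)
  then have "0 < G" and G: "G\<^sup>2 * (1 - v\<^sup>2) = 1" by (simp_all add: G_def power_divide)
  have "0 < p / \<rho>" using assms(2,3) by simp
  then have "0 < h" using enthalpy_1_ge[OF assms(1), of "p / \<rho>"] by (simp add: h_def)
  have cons: "D = \<rho> * G" "m = \<rho> * h * G\<^sup>2 * v" "E = \<rho> * h * G\<^sup>2 - p"
    using assms(5) enthalpy_eq_enthalpy_1[of \<rho> p e] assms(2,3)
    by (simp_all add: cons_of_def Let_def G_def h_def)
  have a: "m / D = h * G * v" using cons \<open>0 < G\<close> assms(2) by (simp add: power2_eq_square)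
  have Y: "sqrt (h\<^sup>2 + (m / D)\<^sup>2) = h * G"
  proof (rule real_sqrt_unique)
    have "(h * G)\<^sup>2 = h\<^sup>2 * (G\<^sup>2 * (1 - v\<^sup>2)) + (h * G * v)\<^sup>2"
      by (simp add: power_mult_distrib algebra_simps)
    then show "(h * G)\<^sup>2 = h\<^sup>2 + (m / D)\<^sup>2"
      unfolding a G by simp
  qed (use \<open>0 < h\<close> \<open>0 < G\<close> in simp)
  show "energy_ratio (enthalpy e 1) (m / D) (p / \<rho>) = E / D"
    unfolding energy_ratio_def h_def[symmetric] Y
    using cons \<open>0 < h\<close> \<open>0 < G\<close> assms(2) by (simp add: field_simps power2_eq_square)
  show "prim_of_theta (enthalpy e 1) D m (p / \<rho>) = (\<rho>, v, p)"
    unfolding prim_of_theta_def Let_def h_def[symmetric] Y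
    using cons(1) a \<open>0 < h\<close> \<open>0 < G\<close> assms(2) by simp
qed

lemma prim_physical:
  assumes "eos_ok e" and "u \<in> Uad"
  shows "\<exists>\<rho> v p. prim e u = (\<rho>, v, p) \<and> 0 < \<rho> \<and> 0 < p \<and> \<bar>v\<bar> < 1 \<and> cons_of e \<rho> v p = u"
proof -
  obtain D m E where u: "u = (D, m, E)" by (cases u)
  have "0 < D" and "sqrt (D\<^sup>2 + m\<^sup>2) < E" using assms(2) by (auto simp: u Uad_def)
  moreover have "D\<^sup>2 + m\<^sup>2 = D\<^sup>2 * (1 + (m / D)\<^sup>2)"
    using \<open>0 < D\<close> by (simp add: power_divide field_simps)
  then have "sqrt (D\<^sup>2 + m\<^sup>2) = D * sqrt (1 + (m / D)\<^sup>2)"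
    using \<open>0 < D\<close> by (simp add: real_sqrt_mult)
  ultimately have "sqrt (1 + (m / D)\<^sup>2) < E / D" by (simp add: field_simps)
  then obtain \<theta> where "0 < \<theta>" and \<theta>: "energy_ratio (enthalpy e 1) (m / D) \<theta> = E / D"
    using energy_ratio_surj[OF admissible_enthalpy_eos[OF assms(1)]] by blast
  define x where "x = prim_of_theta (enthalpy e 1) D m \<theta>"
  let ?phys = "\<lambda>(\<rho>, v, p). 0 < \<rho> \<and> 0 < p \<and> \<bar>v\<bar> < 1 \<and> cons_of e \<rho> v p = (D, m, E)"
  have "?phys x"
    using prim_of_theta_physical[OF assms(1) \<open>0 < D\<close> \<open>0 < \<theta>\<close> \<theta>] by (simp add: x_def)
  moreover have "y = x" if "?phys y" for y
  proof -
    obtain \<rho> v p where y: "y = (\<rho>, v, p)" by (cases y)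
    with that have "0 < \<rho>" "0 < p" and cons: "\<bar>v\<bar> < 1" "cons_of e \<rho> v p = (D, m, E)" by auto
    note eqs = cons_of_imp_prim_of_theta[OF assms(1) this]
    have "inj_on (energy_ratio (enthalpy e 1) (m / D)) {0<..}"
      by (rule strict_mono_on_imp_inj_on strict_mono_on_energy_ratio admissible_enthalpy_eos assms(1))+
    then have "p / \<rho> = \<theta>"
      by (rule inj_onD) (use eqs(1) \<theta> \<open>0 < \<rho>\<close> \<open>0 < p\<close> \<open>0 < \<theta>\<close> in auto)
    then show ?thesis using eqs(2) by (simp add: x_def y)
  qed
  ultimately have "prim e u = x"
    unfolding prim_def u by (rule the_equality)
  with \<open>?phys x\<close> show ?thesis by (auto simp: u)
qed

section \<open>Flux splitting and the Rusanov update\<close>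

lemma abs_le_velocity_addition:
  fixes v c :: real
  assumes "\<bar>v\<bar> < 1" and "0 \<le> c"
  shows "\<bar>v\<bar> \<le> (\<bar>v\<bar> + c) / (1 + c * \<bar>v\<bar>)"
proof -
  have "0 < 1 + c * \<bar>v\<bar>" using assms(2) by (simp add: add_pos_nonneg)
  moreover have "c * v\<^sup>2 \<le> c" using assms mult_left_mono[of "v\<^sup>2" 1 c] by (simp add: abs_square_le_1)
  then have "\<bar>v\<bar> * (1 + c * \<bar>v\<bar>) \<le> \<bar>v\<bar> + c" by (simp add: algebra_simps power2_eq_square)
  ultimately show ?thesis by (simp add: pos_le_divide_eq)
qed

lemma velocity_addition_le_imp:
  fixes v c l :: real
  assumes "\<bar>v\<bar> < 1" and "0 \<le> c" and "(\<bar>v\<bar> + c) / (1 + c * \<bar>v\<bar>) \<le> l" and "l < 1"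
  shows "c * (1 - l * v) \<le> l - v"
proof -
  define s where "s = \<bar>v\<bar>"
  define r where "r = (s + c) / (1 + c * s)"
  have s: "0 \<le> s" "s < 1" "v \<le> s" using assms(1) by (auto simp: s_def)
  have "0 < 1 + c * s" using s assms(2) by (simp add: add_pos_nonneg)
  then have r: "r * (1 + c * s) = s + c" by (simp add: r_def)
  have "r \<le> l" using assms(3) by (simp add: r_def s_def)
  have "c < 1"
  proof (rule ccontr)
    assume "\<not> c < 1"
    then have "1 + c * s \<le> s + c" using s mult_right_mono[of 1 c "1 - s"] by (simp add: algebra_simps)
    then have "1 \<le> r" using \<open>0 < 1 + c * s\<close> by (simp add: r_def)
    with \<open>r \<le> l\<close> \<open>l < 1\<close> show False by simp
  qed
  have "- (c * v) \<le> c * \<bar>v\<bar>" using assms(2) abs_ge_minus_self[of "c * v"] by (simp add: abs_mult)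
  moreover have "c * \<bar>v\<bar> \<le> \<bar>v\<bar>" using assms(2) \<open>c < 1\<close> by (simp add: mult_left_le_one_le)
  ultimately have "0 < 1 + c * v" using assms(1) by linarith
  have "0 \<le> (1 - c\<^sup>2) * (s - v)" using s \<open>c < 1\<close> assms(2) by (simp add: power2_eq_square mult_le_one)
  then have "(v + c) * (1 + c * s) \<le> (s + c) * (1 + c * v)" by (simp add: algebra_simps power2_eq_square)
  also have "(s + c) * (1 + c * v) = r * (1 + c * v) * (1 + c * s)"
    by (metis r mult.commute mult.assoc)
  finally have "v + c \<le> r * (1 + c * v)"
    using \<open>0 < 1 + c * s\<close> by (rule mult_right_le_imp_le)
  also have "\<dots> \<le> l * (1 + c * v)" using \<open>r \<le> l\<close> \<open>0 < 1 + c * v\<close> by (simp add: mult_right_mono)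
  finally show ?thesis by (simp add: algebra_simps)
qed

lemma flux_split_bounds_lt_1:
  fixes \<rho> P p v c l :: real
  assumes "0 < \<rho>" and "0 < p" and "\<rho> + 2 * p \<le> P"
    and cs: "p\<^sup>2 \<le> c\<^sup>2 * ((P - p)\<^sup>2 - \<rho>\<^sup>2)" and "0 \<le> c"
    and "\<bar>v\<bar> < 1" and "(\<bar>v\<bar> + c) / (1 + c * \<bar>v\<bar>) \<le> l" and "l < 1"
  shows "p\<^sup>2 * (1 - l * v)\<^sup>2 \<le> ((P - p)\<^sup>2 - \<rho>\<^sup>2) * (l - v)\<^sup>2"
    and "0 \<le> P * (l - v) - l * p * (1 - v\<^sup>2)"
proof -
  define B where "B = (P - p)\<^sup>2 - \<rho>\<^sup>2"
  have "0 \<le> B"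
    using sq_le_enthalpy_gap[OF assms(1-3)] zero_le_power2[of p] unfolding B_def by linarith
  have "\<bar>v\<bar> \<le> l" using abs_le_velocity_addition[OF assms(6,5)] assms(7) by linarith
  have speed: "c * (1 - l * v) \<le> l - v" by (rule velocity_addition_le_imp[OF assms(6,5,7,8)])
  have "l * v \<le> l * \<bar>v\<bar>" using \<open>\<bar>v\<bar> \<le> l\<close> by (intro mult_left_mono) auto
  also have "\<dots> \<le> 1" using \<open>l < 1\<close> \<open>\<bar>v\<bar> \<le> l\<close> assms(6) by (intro mult_le_one) auto
  finally have "0 \<le> 1 - l * v" by simp
  have "p\<^sup>2 * (1 - l * v)\<^sup>2 \<le> (c\<^sup>2 * B) * (1 - l * v)\<^sup>2"
    using cs by (intro mult_right_mono) (auto simp: B_def)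
  also have "\<dots> = B * (c * (1 - l * v))\<^sup>2" by (simp add: power_mult_distrib)
  also have "\<dots> \<le> B * (l - v)\<^sup>2"
    using speed \<open>0 \<le> 1 - l * v\<close> \<open>0 \<le> c\<close> \<open>0 \<le> B\<close> by (intro mult_left_mono power_mono) auto
  finally show "p\<^sup>2 * (1 - l * v)\<^sup>2 \<le> ((P - p)\<^sup>2 - \<rho>\<^sup>2) * (l - v)\<^sup>2" by (simp add: B_def)
  have "c\<^sup>2 * B \<le> c\<^sup>2 * (P - p)\<^sup>2" by (intro mult_left_mono) (auto simp: B_def)
  then have "p\<^sup>2 \<le> (c * (P - p))\<^sup>2" using cs[folded B_def] by (simp add: power_mult_distrib)
  then have "p \<le> c * (P - p)" by (rule power2_le_imp_le) (use assms(1-3,5) in auto)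
  then have "p * (1 - l * v) \<le> c * (P - p) * (1 - l * v)"
    using \<open>0 \<le> 1 - l * v\<close> by (rule mult_right_mono)
  also have "\<dots> = (P - p) * (c * (1 - l * v))" by (simp add: ac_simps)
  also have "\<dots> \<le> (P - p) * (l - v)" using speed assms(1-3) by (intro mult_left_mono) auto
  finally have "p * (1 - l * v) \<le> (P - p) * (l - v)" .
  moreover have "0 \<le> p * (1 - v) * (1 - l * v)"
    using \<open>0 \<le> 1 - l * v\<close> assms(2,6) by simp
  moreover have "P * (l - v) - l * p * (1 - v\<^sup>2)
      = ((P - p) * (l - v) - p * (1 - l * v)) + p * (1 - v) * (1 - l * v)"
    by (simp add: algebra_simps power2_eq_square)
  ultimately show "0 \<le> P * (l - v) - l * p * (1 - v\<^sup>2)" by linarith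
qed

lemma flux_split_bounds_ge_1:
  fixes \<rho> P p v l :: real
  assumes "0 < \<rho>" and "0 < p" and "\<rho> + 2 * p \<le> P" and "\<bar>v\<bar> < 1" and "v \<le> l" and "1 \<le> l"
  shows "p\<^sup>2 * (1 - l * v)\<^sup>2 \<le> ((P - p)\<^sup>2 - \<rho>\<^sup>2) * (l - v)\<^sup>2"
    and "0 \<le> P * (l - v) - l * p * (1 - v\<^sup>2)"
proof -
  have gap: "p\<^sup>2 \<le> (P - p)\<^sup>2 - \<rho>\<^sup>2" by (rule sq_le_enthalpy_gap[OF assms(1-3)])
  then have "0 \<le> (P - p)\<^sup>2 - \<rho>\<^sup>2" using zero_le_power2[of p] by linarith
  have "1 \<le> l\<^sup>2" using \<open>1 \<le> l\<close> by (simp add: one_le_power)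
  moreover have "v\<^sup>2 \<le> 1" using assms(4) by (simp add: abs_square_le_1)
  ultimately have "0 \<le> (l\<^sup>2 - 1) * (1 - v\<^sup>2)" by simp
  also have "\<dots> = (l - v)\<^sup>2 - (1 - l * v)\<^sup>2" by (simp add: algebra_simps power2_eq_square)
  finally show "p\<^sup>2 * (1 - l * v)\<^sup>2 \<le> ((P - p)\<^sup>2 - \<rho>\<^sup>2) * (l - v)\<^sup>2"
    using gap \<open>0 \<le> (P - p)\<^sup>2 - \<rho>\<^sup>2\<close> by (intro mult_mono) auto
  have "0 \<le> (P - 2 * p) * (l - v) + p * (l - 1) * (1 + v\<^sup>2) + p * (1 - v)\<^sup>2"
    using assms by (intro add_nonneg_nonneg mult_nonneg_nonneg) auto
  also have "\<dots> = P * (l - v) - l * p * (1 - v\<^sup>2)"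
    by (simp add: algebra_simps power2_eq_square)
  finally show "0 \<le> P * (l - v) - l * p * (1 - v\<^sup>2)" .
qed

text \<open>The three components are those of \<open>l u - f(u)\<close> for \<open>u = cons_of e \<rho> v p\<close>, where
  \<open>P = \<rho>h\<close> and \<open>G\<close> is the Lorentz factor.\<close>

lemma flux_split_mem_Ucl:
  fixes \<rho> P p v G c l :: real
  assumes "0 < \<rho>" and "0 < p" and "\<rho> + 2 * p \<le> P"
    and "p\<^sup>2 \<le> c\<^sup>2 * ((P - p)\<^sup>2 - \<rho>\<^sup>2)" and "0 \<le> c"
    and "\<bar>v\<bar> < 1" and "0 < G" and G: "G\<^sup>2 * (1 - v\<^sup>2) = 1"
    and "(\<bar>v\<bar> + c) / (1 + c * \<bar>v\<bar>) \<le> l"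
  shows "(\<rho> * G * (l - v), P * G\<^sup>2 * v * (l - v) - p, l * (P * G\<^sup>2 - p) - P * G\<^sup>2 * v) \<in> Ucl"
proof -
  define B where "B = (P - p)\<^sup>2 - \<rho>\<^sup>2"
  have "v \<le> l" using abs_le_velocity_addition[OF assms(6,5)] assms(9) by linarith
  have sq: "p\<^sup>2 * (1 - l * v)\<^sup>2 \<le> B * (l - v)\<^sup>2" and X: "0 \<le> P * (l - v) - l * p * (1 - v\<^sup>2)"
    using flux_split_bounds_lt_1[OF assms(1-6,9)] flux_split_bounds_ge_1[OF assms(1-3,6) \<open>v \<le> l\<close>]
    unfolding B_def by (cases "l < 1"; simp)+
  have "l * (P * G\<^sup>2 - p) - P * G\<^sup>2 * v = G\<^sup>2 * (P * (l - v) - l * p * (1 - v\<^sup>2)) + l * p * (G\<^sup>2 * (1 - v\<^sup>2) - 1)"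
    by (simp add: algebra_simps)
  with G X have w3: "0 \<le> l * (P * G\<^sup>2 - p) - P * G\<^sup>2 * v" by simp
  have w1: "0 \<le> \<rho> * G * (l - v)" using assms(1,7) \<open>v \<le> l\<close> by simp
  have "(l * (P * G\<^sup>2 - p) - P * G\<^sup>2 * v)\<^sup>2 - (\<rho> * G * (l - v))\<^sup>2 - (P * G\<^sup>2 * v * (l - v) - p)\<^sup>2
      = G\<^sup>2 * (B * (l - v)\<^sup>2 - p\<^sup>2 * (1 - l * v)\<^sup>2)
        + (G\<^sup>2 * (1 - v\<^sup>2) - 1) * (P\<^sup>2 * G\<^sup>2 * (l - v)\<^sup>2 - p\<^sup>2 * (l\<^sup>2 - 1))"
    by (simp add: B_def algebra_simps power2_eq_square)
  moreover have "0 \<le> G\<^sup>2 * (B * (l - v)\<^sup>2 - p\<^sup>2 * (1 - l * v)\<^sup>2)" using sq by simp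
  ultimately have "(\<rho> * G * (l - v))\<^sup>2 + (P * G\<^sup>2 * v * (l - v) - p)\<^sup>2 \<le> (l * (P * G\<^sup>2 - p) - P * G\<^sup>2 * v)\<^sup>2"
    using G by simp
  with w1 w3 show ?thesis by (intro mem_UclI)
qed

lemma cons_of_flux_eq:
  assumes "prim e u = (\<rho>, v, p)" and "cons_of e \<rho> v p = u"
  defines "G \<equiv> 1 / sqrt (1 - v\<^sup>2)" and "P \<equiv> \<rho> * enthalpy e \<rho> p"
  shows "u = (\<rho> * G, P * G\<^sup>2 * v, P * G\<^sup>2 - p)"
    and "flux e u = (\<rho> * G * v, P * G\<^sup>2 * v * v + p, P * G\<^sup>2 * v)"
proof -
  show u: "u = (\<rho> * G, P * G\<^sup>2 * v, P * G\<^sup>2 - p)"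
    using assms(2) by (simp add: cons_of_def Let_def P_def G_def)
  have "flux e u = (case u of (D, m, E) \<Rightarrow> (D * v, m * v + p, m))"
    by (simp add: flux_def vel_def pres_def assms(1))
  then show "flux e u = (\<rho> * G * v, P * G\<^sup>2 * v * v + p, P * G\<^sup>2 * v)"
    by (simp add: u)
qed

lemma scaleR_flux_mem_Ucl:
  assumes "eos_ok e" and "u \<in> Uad" and "spec_rad e u \<le> l"
  shows "l *\<^sub>R u - flux e u \<in> Ucl" and "l *\<^sub>R u + flux e u \<in> Ucl"
proof -
  obtain \<rho> v p where prim: "prim e u = (\<rho>, v, p)" and "0 < \<rho>" "0 < p" "\<bar>v\<bar> < 1"
    and u: "cons_of e \<rho> v p = u"
    using prim_physical[OF assms(1,2)] by blast
  define P where "P = \<rho> * enthalpy e \<rho> p"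
  define G where "G = 1 / sqrt (1 - v\<^sup>2)"
  define c where "c = sound_speed e u"
  have "0 < 1 - v\<^sup>2" using \<open>\<bar>v\<bar> < 1\<close> by (simp add: abs_square_less_1)
  then have "0 < G" and G: "G\<^sup>2 * (1 - v\<^sup>2) = 1" by (simp_all add: G_def power_divide)
  have "0 \<le> c" and cs: "p\<^sup>2 \<le> c\<^sup>2 * ((P - p)\<^sup>2 - \<rho>\<^sup>2)"
    using sound_speed_sq_pos[OF assms(1) \<open>0 < \<rho>\<close> \<open>0 < p\<close>] sound_speed_sq_bound[OF assms(1) \<open>0 < \<rho>\<close> \<open>0 < p\<close>]
    by (simp_all add: c_def sound_speed_def pres_def prim P_def)
  have speed: "(\<bar>v\<bar> + c) / (1 + c * \<bar>v\<bar>) \<le> l"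
    using assms(3) by (simp add: spec_rad_def c_def vel_def prim mult.commute)
  have "\<rho> + 2 * p \<le> P"
    using enthalpy_density_ge[OF assms(1) \<open>0 < \<rho>\<close> \<open>0 < p\<close>] by (simp add: P_def)
  note split = flux_split_mem_Ucl[OF \<open>0 < \<rho>\<close> \<open>0 < p\<close> this cs \<open>0 \<le> c\<close> _ \<open>0 < G\<close>]
  note uf = cons_of_flux_eq[OF prim u, folded G_def P_def]
  show "l *\<^sub>R u - flux e u \<in> Ucl"
    using split[of v l] \<open>\<bar>v\<bar> < 1\<close> G speed
    unfolding uf(2) by (subst uf(1)) (simp add: algebra_simps)
  have "(\<rho> * G * (l - - v), P * G\<^sup>2 * (- v) * (l - - v) - p, l * (P * G\<^sup>2 - p) - P * G\<^sup>2 * (- v)) \<in> Ucl"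
    using split[of "- v" l] \<open>\<bar>v\<bar> < 1\<close> G speed by simp
  then have "(\<rho> * G * (l - - v), - (P * G\<^sup>2 * (- v) * (l - - v) - p), l * (P * G\<^sup>2 - p) - P * G\<^sup>2 * (- v)) \<in> Ucl"
    by (simp only: Ucl_reflect)
  moreover have "l *\<^sub>R u + flux e u
      = (\<rho> * G * (l - - v), - (P * G\<^sup>2 * (- v) * (l - - v) - p), l * (P * G\<^sup>2 - p) - P * G\<^sup>2 * (- v))"
    unfolding uf(2) by (subst uf(1)) (simp add: algebra_simps)
  ultimately show "l *\<^sub>R u + flux e u \<in> Ucl" by simp
qed

lemma rusanov_update_eq:
  "uc - k *\<^sub>R (rusanov e uc ur - rusanov e ul uc) =
     (1 - k * (lam e ul uc + lam e uc ur) / 2) *\<^sub>R uc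
     + (k / 2) *\<^sub>R (lam e uc ur *\<^sub>R ur - flux e ur)
     + (k / 2) *\<^sub>R (lam e ul uc *\<^sub>R ul + flux e ul)"
  by (simp add: rusanov_def algebra_simps add_divide_distrib)

theorem theorem1:
  fixes e :: eos and dx dt w :: real and ul uc ur :: "real \<times> real \<times> real"
  assumes "eos_ok e"
    and "dx > 0" and "dt > 0" and "w > 0"
    and "ul \<in> Uad" and "uc \<in> Uad" and "ur \<in> Uad"
    and "dt * (lam e ul uc + lam e uc ur) / (2 * w * dx) < 1"
  shows "uc - (dt / (w * dx)) *\<^sub>R (rusanov e uc ur - rusanov e ul uc) \<in> Uad"
proof -
  define k where "k = dt / (w * dx)"
  have "0 < k" using assms(2-4) by (simp add: k_def)
  have "0 < 1 - k * (lam e ul uc + lam e uc ur) / 2"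
    using assms(8) by (simp add: k_def)
  have "lam e uc ur *\<^sub>R ur - flux e ur \<in> Ucl"
    by (rule scaleR_flux_mem_Ucl(1)[OF assms(1,7)]) (simp add: lam_def)
  moreover have "lam e ul uc *\<^sub>R ul + flux e ul \<in> Ucl"
    by (rule scaleR_flux_mem_Ucl(2)[OF assms(1,5)]) (simp add: lam_def)
  ultimately show ?thesis
    unfolding k_def[symmetric] rusanov_update_eq using assms(6) \<open>0 < k\<close> \<open>0 < 1 - _\<close>
    by (intro add_mem_Uad_Ucl scaleR_mem_Uad scaleR_mem_Ucl) auto
qed

end
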